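(* Let $L>1$ and consider widths $[N_1,\dots,N_L]=[D,D,\dots,D,N_L]$. The union over $N_L\in\mathbb{N}_{>0}$ of the sets of sampled ReLU networks $\Phi\colon\mathcal{X}\to\mathbb{R}^{N_{L+1}}$ with $L$ hidden layers of widths $[D,\dots,D,N_L]$ is dense in $C(\mathcal{X},\mathbb{R}^{N_{L+1}})$ with respect to the uniform norm.
   Context: Input space: Fix $D\ge1$, Euclidean norm and inner product on $\mathbb{R}^D$. For $A\subseteq\mathbb{R}^D$ let $d(z,A)=\inf_{a\in A}\|z-a\|$, $\mathrm{Med}(A)=\{z:\exists p\neq q\in A,\ \|p-z\|=\|q-z\|=d(z,A)\}$, reach $\tau_A=\inf_{a\in A}d(a,\mathrm{Med}(A))$. Let $\mathcal{X}'\subset\mathbb{R}^D$ be nonempty compact with $\tau_{\mathcal{X}'}>0$, fix $0<\epsilon_I<\min\{\tau_{\mathcal{X}'},1\}$, and $\mathcal{X}=\{x:d(x,\mathcal{X}')\le\epsilon_I\}$. Networks: with $\phi(t)=\max\{t,0\}$, $N_0=D$, a network computes $\Phi^{(0)}(x)=x$, $\Phi^{(l)}(x)=\phi(W_l\Phi^{(l-1)}(x)-b_l)$ for $l=1,\dots,L$, $\Phi(x)=W_{L+1}\Phi^{(L)}(x)-b_{L+1}$; $w_{l,i},b_{l,i}$ denote the $i$-th row of $W_l$ and entry of $b_l$. It is a sampled network if for all $l\le L$, $i\le N_l$ there are $x^{(1)}_{0,i},x^{(2)}_{0,i}\in\mathcal{X}$ such that $x^{(j)}_{l-1,i}=\Phi^{(l-1)}(x^{(j)}_{0,i})$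 are distinct and $w_{l,i}=\frac{x^{(2)}_{l-1,i}-x^{(1)}_{l-1,i}}{\|x^{(2)}_{l-1,i}-x^{(1)}_{l-1,i}\|^2}$, $b_{l,i}=\langle w_{l,i},x^{(1)}_{l-1,i}\rangle$; $W_{L+1},b_{L+1}$ are unrestricted. *)

theory Defs
  imports "HOL-Analysis.Analysis"
begin

text \<open>Medial axis and reach (reach is extended-real valued; the reach is +infinity
  when the medial axis is empty, matching d(a, empty) = +infinity).\<close>

definition medial_axis :: "('a::real_normed_vector) set \<Rightarrow> 'a set" where
  "medial_axis A = {z. \<exists>p\<in>A. \<exists>q\<in>A. p \<noteq> q \<and>
      dist p z = infdist z A \<and> dist q z = infdist z A}"

definition reach :: "('a::real_normed_vector) set \<Rightarrow> ereal" where
  "reach A = (INF a\<in>A. INF z\<in>medial_axis A. ereal (dist a z))"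

definition relu :: "real \<Rightarrow> real" where
  "relu t = max t 0"

text \<open>Hidden layers 1..L-1 of width D (neurons indexed by the index type 'n of R^D).
  Layer l, neuron i has weight row w l i and bias b l i.\<close>

fun hidden :: "(nat \<Rightarrow> 'n \<Rightarrow> real^'n) \<Rightarrow> (nat \<Rightarrow> 'n \<Rightarrow> real) \<Rightarrow> nat \<Rightarrow>
    real^'n \<Rightarrow> real^'n" where
  "hidden w b 0 x = x"
| "hidden w b (Suc l) x = (\<chi> i. relu (w (Suc l) i \<bullet> hidden w b l x - b (Suc l) i))"

text \<open>Full network with L hidden layers: layers 1..L-1 of width D, layer L of width NL
  (weights wL i, biases bL i, i < NL), and an unrestricted affine output layer
  W_{L+1} (columns c i) and bias d.\<close>

definition net :: "nat \<Rightarrow> (nat \<Rightarrow> 'n \<Rightarrow> real^'n) \<Rightarrow> (nat \<Rightarrow> 'n \<Rightarrow> real) \<Rightarrow>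
    nat \<Rightarrow> (nat \<Rightarrow> real^'n) \<Rightarrow> (nat \<Rightarrow> real) \<Rightarrow> (nat \<Rightarrow> real^'m) \<Rightarrow> real^'m \<Rightarrow>
    real^'n \<Rightarrow> real^'m" where
  "net L w b NL wL bL c d x =
     (\<Sum>i<NL. relu (wL i \<bullet> hidden w b (L - 1) x - bL i) *\<^sub>R c i) - d"

definition sampled_neuron :: "real^'n \<Rightarrow> real^'n \<Rightarrow> real^'n \<Rightarrow> real \<Rightarrow> bool" where
  "sampled_neuron p q v beta \<longleftrightarrow>
     p \<noteq> q \<and> v = (1 / (norm (q - p))\<^sup>2) *\<^sub>R (q - p) \<and> beta = v \<bullet> p"

definition sampled_net :: "(real^'n) set \<Rightarrow> nat \<Rightarrow> (nat \<Rightarrow> 'n \<Rightarrow> real^'n) \<Rightarrow>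
    (nat \<Rightarrow> 'n \<Rightarrow> real) \<Rightarrow> nat \<Rightarrow> (nat \<Rightarrow> real^'n) \<Rightarrow> (nat \<Rightarrow> real) \<Rightarrow> bool" where
  "sampled_net X L w b NL wL bL \<longleftrightarrow>
     (\<forall>l\<in>{1..<L}. \<forall>i. \<exists>x1\<in>X. \<exists>x2\<in>X.
        sampled_neuron (hidden w b (l - 1) x1) (hidden w b (l - 1) x2) (w l i) (b l i)) \<and>
     (\<forall>i<NL. \<exists>x1\<in>X. \<exists>x2\<in>X.
        sampled_neuron (hidden w b (L - 1) x1) (hidden w b (L - 1) x2) (wL i) (bL i))"

end

theory Submission
  imports Defs
begin

text \<open>The first hidden layer maps x to (x - m) / epsI, where m is a coordinatewise lower bound
  of the domain, so every later hidden layer can pass this on unchanged with neurons sampled along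
  the coordinate axes. A last-layer neuron sampled from two domain points z, p computes
  relu ((p - z) \<bullet> (x - z)) / norm (p - z)^2, and choosing z, p on a segment through a point
  of X' in direction v yields relu (v \<bullet> x - t) for a set of thresholds t that is dense in the
  range of v \<bullet> x. Piecewise linear interpolation with these knots approximates exp (v \<bullet> x)
  uniformly, and the Stone-Weierstrass theorem for sums of exponentials then gives every
  continuous function, one output coordinate at a time.\<close>

lemma relu_scale: "0 \<le> c \<Longrightarrow> relu (c * t) = c * relu t"
  by (auto simp: relu_def max_def mult_le_0_iff zero_le_mult_iff)

definition sampled_on :: "'a set \<Rightarrow> ('a \<Rightarrow> real^'n) \<Rightarrow> real^'n \<Rightarrow> real \<Rightarrow> bool" where
  "sampled_on X G v \<beta> \<longleftrightarrow> (\<exists>x1\<in>X. \<exists>x2\<in>X. sampled_neuron (G x1) (G x2) v \<beta>)"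

text \<open>The feature map G stands for the first L - 1 hidden layers.\<close>

definition representable :: "'a set \<Rightarrow> ('a \<Rightarrow> real^'n) \<Rightarrow> ('a \<Rightarrow> 'b::real_vector) \<Rightarrow> bool" where
  "representable X G F \<longleftrightarrow> (\<exists>(N::nat) V B C d. (\<forall>i<N. sampled_on X G (V i) (B i)) \<and>
     (\<forall>x\<in>X. F x = (\<Sum>i<N. relu (V i \<bullet> G x - B i) *\<^sub>R C i) - d))"

lemma representable_cong:
  "representable X G F \<Longrightarrow> (\<And>x. x \<in> X \<Longrightarrow> F x = F' x) \<Longrightarrow> representable X G F'"
  unfolding representable_def by metis

lemma representable_const: "representable X G (\<lambda>x. c)"
  unfolding representable_def
  by (rule exI[of _ 0], rule exI, rule exI, rule exI, rule exI[of _ "-c"]) simp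

lemma representable_neuron:
  "sampled_on X G v \<beta> \<Longrightarrow> representable X G (\<lambda>x. relu (v \<bullet> G x - \<beta>))"
  unfolding representable_def
  by (rule exI[of _ 1], rule exI[of _ "\<lambda>_. v"], rule exI[of _ "\<lambda>_. \<beta>"],
      rule exI[of _ "\<lambda>_. 1"], rule exI[of _ 0]) simp

lemma representable_linear:
  assumes "linear h" "representable X G F"
  shows "representable X G (\<lambda>x. h (F x))"
proof -
  obtain N :: nat and V B C d where "\<forall>i<N. sampled_on X G (V i) (B i)"
    and F: "\<forall>x\<in>X. F x = (\<Sum>i<N. relu (V i \<bullet> G x - B i) *\<^sub>R C i) - d"
    using assms(2) unfolding representable_def by blast
  moreover have "\<forall>x\<in>X. h (F x) = (\<Sum>i<N. relu (V i \<bullet> G x - B i) *\<^sub>R h (C i)) - h d"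
    using F by (simp add: linear_diff[OF assms(1)] linear_sum[OF assms(1)] linear_scale[OF assms(1)])
  ultimately show ?thesis
    unfolding representable_def by (intro exI[of _ N] exI[of _ V] exI[of _ B] exI[of _ "\<lambda>i. h (C i)"]) blast
qed

lemma representable_scale:
  "representable X G (F :: 'a \<Rightarrow> real) \<Longrightarrow> representable X G (\<lambda>x. c * F x)"
  by (rule representable_linear[OF bounded_linear.linear[OF bounded_linear_mult_right]])

lemma representable_add:
  assumes "representable X G F1" "representable X G F2"
  shows "representable X G (\<lambda>x. F1 x + F2 x)"
proof -
  obtain N1 :: nat and V1 B1 C1 d1 where S1: "\<forall>i<N1. sampled_on X G (V1 i) (B1 i)"
    and F1: "\<forall>x\<in>X. F1 x = (\<Sum>i<N1. relu (V1 i \<bullet> G x - B1 i) *\<^sub>R C1 i) - d1"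
    using assms(1) unfolding representable_def by blast
  obtain N2 :: nat and V2 B2 C2 d2 where S2: "\<forall>i<N2. sampled_on X G (V2 i) (B2 i)"
    and F2: "\<forall>x\<in>X. F2 x = (\<Sum>i<N2. relu (V2 i \<bullet> G x - B2 i) *\<^sub>R C2 i) - d2"
    using assms(2) unfolding representable_def by blast
  define V where "V i = (if i < N1 then V1 i else V2 (i - N1))" for i
  define B where "B i = (if i < N1 then B1 i else B2 (i - N1))" for i
  define C where "C i = (if i < N1 then C1 i else C2 (i - N1))" for i
  have split: "(\<Sum>i<N1 + N2. h i) = (\<Sum>i<N1. h i) + (\<Sum>i<N2. h (N1 + i))" for h
    by (induction N2) (simp_all add: algebra_simps)
  show ?thesis unfolding representable_def
  proof (intro exI conjI)
    show "\<forall>i<N1 + N2. sampled_on X G (V i) (B i)"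
      using S1 S2 by (auto simp: V_def B_def)
    show "\<forall>x\<in>X. F1 x + F2 x =
        (\<Sum>i<N1 + N2. relu (V i \<bullet> G x - B i) *\<^sub>R C i) - (d1 + d2)"
      using F1 F2 by (simp add: split V_def B_def C_def algebra_simps)
  qed
qed

lemma representable_sum:
  "finite S \<Longrightarrow> (\<And>j. j \<in> S \<Longrightarrow> representable X G (F j)) \<Longrightarrow>
     representable X G (\<lambda>x. \<Sum>j\<in>S. F j x)"
  by (induction S rule: finite_induct) (auto intro: representable_const representable_add)

lemma representable_pos_width:
  assumes "representable X G F" "x1 \<in> X" "x2 \<in> X" "G x1 \<noteq> G x2"
  shows "\<exists>N>(0::nat). \<exists>V B C d. (\<forall>i<N. sampled_on X G (V i) (B i)) \<and>
     (\<forall>x\<in>X. F x = (\<Sum>i<N. relu (V i \<bullet> G x - B i) *\<^sub>R C i) - d)"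
proof -
  obtain N :: nat and V B C d where S: "\<forall>i<N. sampled_on X G (V i) (B i)"
    and F: "\<forall>x\<in>X. F x = (\<Sum>i<N. relu (V i \<bullet> G x - B i) *\<^sub>R C i) - d"
    using assms(1) unfolding representable_def by blast
  define v where "v = (1 / (norm (G x2 - G x1))\<^sup>2) *\<^sub>R (G x2 - G x1)"
  have "sampled_on X G v (v \<bullet> G x1)"
    unfolding sampled_on_def sampled_neuron_def v_def using assms(2-4) by blast
  show ?thesis
  proof (intro exI conjI)
    show "0 < Suc N" by simp
    show "\<forall>i<Suc N. sampled_on X G ((V(N := v)) i) ((B(N := v \<bullet> G x1)) i)"
      using S \<open>sampled_on X G v (v \<bullet> G x1)\<close> by (simp add: less_Suc_eq)
    show "\<forall>x\<in>X. F x = (\<Sum>i<Suc N. relu ((V(N := v)) i \<bullet> G x - (B(N := v \<bullet> G x1)) i)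
        *\<^sub>R (C(N := 0)) i) - d"
      using F by simp
  qed
qed

definition approximable :: "'a set \<Rightarrow> ('a \<Rightarrow> real^'n) \<Rightarrow> ('a \<Rightarrow> real) \<Rightarrow> bool" where
  "approximable X G f \<longleftrightarrow>
     (\<forall>e>0. \<exists>F. representable X G F \<and> (\<forall>x\<in>X. \<bar>f x - F x\<bar> < e))"

lemma representable_imp_approximable: "representable X G f \<Longrightarrow> approximable X G f"
  unfolding approximable_def by force

lemma approximable_uniform_limit:
  assumes "\<And>e. e > 0 \<Longrightarrow> \<exists>g. approximable X G g \<and> (\<forall>x\<in>X. \<bar>f x - g x\<bar> < e)"
  shows "approximable X G f"
  unfolding approximable_def
proof (intro allI impI)
  fix e :: real assume "e > 0"
  then obtain g where g: "approximable X G g" "\<forall>x\<in>X. \<bar>f x - g x\<bar> < e / 2"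
    using assms half_gt_zero by blast
  then obtain F where "representable X G F" "\<forall>x\<in>X. \<bar>g x - F x\<bar> < e / 2"
    using \<open>e > 0\<close> half_gt_zero unfolding approximable_def by blast
  moreover have "\<bar>f x - F x\<bar> < e" if "x \<in> X" "\<bar>g x - F x\<bar> < e / 2" for x
  proof -
    have "\<bar>f x - g x\<bar> < e / 2" using g(2) that(1) by blast
    with that(2) show ?thesis by linarith
  qed
  ultimately show "\<exists>F. representable X G F \<and> (\<forall>x\<in>X. \<bar>f x - F x\<bar> < e)"
    by blast
qed

lemma approximable_add:
  assumes "approximable X G f" "approximable X G g"
  shows "approximable X G (\<lambda>x. f x + g x)"
  unfolding approximable_def
proof (intro allI impI)
  fix e :: real assume "e > 0"
  then obtain F1 F2 where F1: "representable X G F1" "\<forall>x\<in>X. \<bar>f x - F1 x\<bar> < e / 2"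
    and F2: "representable X G F2" "\<forall>x\<in>X. \<bar>g x - F2 x\<bar> < e / 2"
    using assms half_gt_zero unfolding approximable_def by metis
  have "\<bar>f x + g x - (F1 x + F2 x)\<bar> < e" if "x \<in> X" for x
  proof -
    have "\<bar>f x - F1 x\<bar> < e / 2" "\<bar>g x - F2 x\<bar> < e / 2"
      using F1(2) F2(2) that by auto
    then show ?thesis by linarith
  qed
  with F1(1) F2(1) show "\<exists>F. representable X G F \<and> (\<forall>x\<in>X. \<bar>f x + g x - F x\<bar> < e)"
    by (intro exI[of _ "\<lambda>x. F1 x + F2 x"]) (simp add: representable_add)
qed

lemma approximable_scale:
  assumes "approximable X G f"
  shows "approximable X G (\<lambda>x. c * f x)"
  unfolding approximable_def
proof (intro allI impI)
  fix e :: real assume "e > 0"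
  then obtain F where F: "representable X G F" "\<forall>x\<in>X. \<bar>f x - F x\<bar> < e / (\<bar>c\<bar> + 1)"
    using assms unfolding approximable_def by (meson divide_pos_pos abs_ge_zero add_nonneg_pos zero_less_one)
  have "\<bar>c * f x - c * F x\<bar> < e" if "x \<in> X" for x
  proof -
    have "\<bar>c * f x - c * F x\<bar> \<le> (\<bar>c\<bar> + 1) * \<bar>f x - F x\<bar>"
      by (simp add: abs_mult mult_right_mono flip: right_diff_distrib)
    also have "\<dots> < e"
      using F(2) that by (simp add: pos_less_divide_eq mult.commute add_pos_nonneg)
    finally show ?thesis .
  qed
  with F(1) show "\<exists>F. representable X G F \<and> (\<forall>x\<in>X. \<bar>c * f x - F x\<bar> < e)"
    by (intro exI[of _ "\<lambda>x. c * F x"]) (simp add: representable_scale)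
qed

inductive relu_comb :: "real set \<Rightarrow> (real \<Rightarrow> real) \<Rightarrow> bool" for T where
  const: "relu_comb T (\<lambda>s. c)"
| add: "relu_comb T P \<Longrightarrow> u \<in> T \<Longrightarrow> relu_comb T (\<lambda>s. P s + a * relu (s - u))"

lemma relu_comb_mono: "relu_comb T P \<Longrightarrow> T \<subseteq> T' \<Longrightarrow> relu_comb T' P"
  by (induction rule: relu_comb.induct) (auto intro: relu_comb.intros)

lemma lipschitz_on_split_real:
  fixes f :: "real \<Rightarrow> 'a::metric_space"
  assumes left: "M-lipschitz_on {..c} f" and right: "M-lipschitz_on {c..} f"
  shows "M-lipschitz_on UNIV f"
proof (rule lipschitz_on_leI)
  fix x y :: real assume "x \<le> y"
  consider "y \<le> c" | "c \<le> x" | "x \<le> c" "c \<le> y" by linarith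
  then show "dist (f x) (f y) \<le> M * dist x y"
  proof cases
    case 3
    have "dist (f x) (f y) \<le> dist (f x) (f c) + dist (f c) (f y)"
      by (rule dist_triangle)
    also have "\<dots> \<le> M * dist x c + M * dist c y"
      using 3 by (intro add_mono lipschitz_onD[OF left] lipschitz_onD[OF right]) auto
    also have "\<dots> = M * dist x y"
      using 3 by (simp add: dist_real_def algebra_simps)
    finally show ?thesis .
  qed (use \<open>x \<le> y\<close> in \<open>auto intro: lipschitz_onD[OF left] lipschitz_onD[OF right]\<close>)
qed (rule lipschitz_on_nonneg[OF left])

lemma relu_comb_add_ramp:
  fixes \<phi> :: "real \<Rightarrow> real"
  assumes P: "relu_comb T P" "M-lipschitz_on UNIV P" "\<forall>s\<ge>l. P s = \<phi> l"
    and "l \<in> T" "b \<in> T" "l < b" "\<bar>\<phi> b - \<phi> l\<bar> \<le> M * (b - l)"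
  shows "\<exists>Q. relu_comb T Q \<and> (\<forall>s\<le>l. Q s = P s) \<and> M-lipschitz_on UNIV Q \<and> (\<forall>s\<ge>b. Q s = \<phi> b)"
proof -
  have M: "0 \<le> M" using lipschitz_on_nonneg[OF P(2)] .
  define \<sigma> where "\<sigma> = (\<phi> b - \<phi> l) / (b - l)"
  have \<sigma>: "\<bar>\<sigma>\<bar> \<le> M"
    using assms(6,7) by (simp add: \<sigma>_def abs_divide divide_le_eq)
  define Q where "Q s = P s + \<sigma> * relu (s - l) + (- \<sigma>) * relu (s - b)" for s
  have Q_left: "Q s = P s" if "s \<le> l" for s
    using that assms(6) by (simp add: Q_def relu_def)
  have Q_right: "Q s = \<phi> l + \<sigma> * (min s b - l)" if "l \<le> s" for s
    using that assms(6) P(3) by (simp add: Q_def relu_def min_def algebra_simps)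
  have "relu_comb T Q"
    unfolding Q_def by (intro relu_comb.add P(1) assms(4,5))
  moreover have "M-lipschitz_on UNIV Q"
  proof (rule lipschitz_on_split_real)
    show "M-lipschitz_on {..l} Q"
      by (rule lipschitz_on_transform[OF lipschitz_on_subset[OF P(2) subset_UNIV]]) (simp add: Q_left)
    show "M-lipschitz_on {l..} Q"
    proof (rule lipschitz_onI)
      fix s r assume "s \<in> {l..}" "r \<in> {l..}"
      then have "dist (Q s) (Q r) = \<bar>\<sigma>\<bar> * \<bar>min s b - min r b\<bar>"
        by (simp add: Q_right dist_real_def abs_mult[symmetric] algebra_simps)
      also have "\<dots> \<le> M * dist s r"
        using \<sigma> by (intro mult_mono) (auto simp: dist_real_def min_def)
      finally show "dist (Q s) (Q r) \<le> M * dist s r" .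
    qed (fact M)
  qed
  moreover have "\<forall>s\<ge>b. Q s = \<phi> b"
    using Q_right assms(6) by (auto simp: \<sigma>_def min_def)
  ultimately show ?thesis
    using Q_left by blast
qed

lemma relu_interpolation:
  fixes \<phi> :: "real \<Rightarrow> real"
  assumes "finite C" "C \<noteq> {}" "M-lipschitz_on C \<phi>"
  shows "\<exists>P. relu_comb C P \<and> (\<forall>t\<in>C. P t = \<phi> t) \<and> M-lipschitz_on UNIV P \<and>
    (\<forall>s\<ge>Max C. P s = \<phi> (Max C))"
  using assms
proof (induction C rule: finite_linorder_max_induct)
  case empty
  then show ?case by simp
next
  case (insert b A)
  have Max: "Max (insert b A) = b"
    using insert.hyps by (auto intro: Max_eqI less_imp_le)
  show ?case
  proof (cases "A = {}")
    case True
    then show ?thesis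
      using lipschitz_on_nonneg[OF insert.prems(2)]
      by (intro exI[of _ "\<lambda>_. \<phi> b"]) (auto intro: relu_comb.const lipschitz_on_mono[OF lipschitz_on_constant])
  next
    case False
    define l where "l = Max A"
    have l: "l \<in> A" "l < b" "\<forall>t\<in>A. t \<le> l"
      using False insert.hyps by (auto simp: l_def)
    obtain P where P: "relu_comb A P" "\<forall>t\<in>A. P t = \<phi> t" "M-lipschitz_on UNIV P"
        "\<forall>s\<ge>l. P s = \<phi> l"
      using insert.IH[OF False lipschitz_on_subset[OF insert.prems(2)]] unfolding l_def by blast
    have slope: "\<bar>\<phi> b - \<phi> l\<bar> \<le> M * (b - l)"
      using lipschitz_onD[OF insert.prems(2), of b l] l by (simp add: dist_real_def)
    have "relu_comb (insert b A) P"
      by (rule relu_comb_mono[OF P(1)]) auto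
    then obtain Q where Q: "relu_comb (insert b A) Q" "\<forall>s\<le>l. Q s = P s" "M-lipschitz_on UNIV Q"
        "\<forall>s\<ge>b. Q s = \<phi> b"
      using relu_comb_add_ramp[OF _ P(3,4) _ insertI1 l(2) slope] l(1) by blast
    have "\<forall>t\<in>insert b A. Q t = \<phi> t"
      using Q(2,4) P(2) l(3) by auto
    with Q(1,3,4) show ?thesis
      unfolding Max by blast
  qed
qed

lemma representable_relu_comb:
  assumes "relu_comb T P" "\<And>t. t \<in> T \<Longrightarrow> representable X G (\<lambda>x. relu (g x - t))"
  shows "representable X G (\<lambda>x. P (g x))"
  using assms(1)
proof induction
  case (const c)
  show ?case by (rule representable_const)
next
  case (add P u a)
  then show ?case by (intro representable_add representable_scale assms(2))
qed

lemma finite_ball_cover_from_dense: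
  fixes K :: "'a::metric_space set"
  assumes "compact K" "K \<subseteq> closure T" "0 < h"
  obtains C where "C \<subseteq> T" "finite C" "K \<subseteq> (\<Union>t\<in>C. ball t h)"
proof -
  have cover: "K \<subseteq> (\<Union>t\<in>T. ball t h)"
  proof
    fix k assume "k \<in> K"
    then have "k \<in> closure T" using assms(2) by blast
    then obtain t where "t \<in> T" "dist k t < h"
      using closure_approachableD[OF _ assms(3)] by blast
    then show "k \<in> (\<Union>t\<in>T. ball t h)" by (auto simp: dist_commute)
  qed
  obtain C where "C \<subseteq> T" "finite C" "K \<subseteq> (\<Union>t\<in>C. ball t h)"
    by (rule compactE_image[OF assms(1) _ cover]) auto
  then show thesis by (rule that)
qed

lemma approximable_comp_lipschitz:
  fixes g :: "'a \<Rightarrow> real"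
  assumes "compact (g ` X)" "g ` X \<subseteq> closure T" "M-lipschitz_on (closure T) \<phi>"
    and relu_T: "\<And>t. t \<in> T \<Longrightarrow> representable X G (\<lambda>x. relu (g x - t))"
  shows "approximable X G (\<lambda>x. \<phi> (g x))"
  unfolding approximable_def
proof (intro allI impI)
  fix e :: real assume "e > 0"
  have M: "0 \<le> M" using lipschitz_on_nonneg[OF assms(3)] .
  define h where "h = e / (2 * M + 1)"
  have h: "0 < h" "2 * M * h < e"
    using \<open>e > 0\<close> M by (simp_all add: h_def field_simps)
  obtain C where C: "C \<subseteq> T" "finite C" "g ` X \<subseteq> (\<Union>t\<in>C. ball t h)"
    using finite_ball_cover_from_dense[OF assms(1,2) h(1)] .
  show "\<exists>F. representable X G F \<and> (\<forall>x\<in>X. \<bar>\<phi> (g x) - F x\<bar> < e)"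
  proof (cases "C = {}")
    case True
    then show ?thesis using C(3) representable_const by fastforce
  next
    case False
    have lip_C: "M-lipschitz_on C \<phi>"
      using lipschitz_on_subset[OF assms(3)] C(1) closure_subset by blast
    obtain P where P: "relu_comb C P" "\<forall>t\<in>C. P t = \<phi> t" "M-lipschitz_on UNIV P"
      using relu_interpolation[OF C(2) False lip_C] by blast
    have "representable X G (\<lambda>x. P (g x))"
      using C(1) by (intro representable_relu_comb[OF P(1)] relu_T) auto
    moreover have "\<bar>\<phi> (g x) - P (g x)\<bar> < e" if "x \<in> X" for x
    proof -
      obtain t where t: "t \<in> C" "dist t (g x) < h" using C(3) \<open>x \<in> X\<close> by auto
      have "\<bar>\<phi> (g x) - P (g x)\<bar> \<le> dist (\<phi> (g x)) (\<phi> t) + dist (P t) (P (g x))"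
        using P(2) t(1) by (simp add: dist_real_def)
      also have "\<dots> \<le> M * dist (g x) t + M * dist t (g x)"
        using assms(2) C(1) t(1) \<open>x \<in> X\<close> closure_subset
        by (intro add_mono lipschitz_onD[OF assms(3)] lipschitz_onD[OF P(3)]) auto
      also have "\<dots> \<le> 2 * M * h"
        using t(2) M by (simp add: dist_commute mult_left_mono)
      finally show ?thesis using h(2) by linarith
    qed
    ultimately show ?thesis by blast
  qed
qed

lemma exp_lipschitz_on_atMost: "(exp B)-lipschitz_on {..B} exp"
proof (rule lipschitz_onI)
  have "exp b - exp a \<le> exp B * (b - a)" if "a \<le> b" "b \<le> B" for a b :: real
  proof -
    have "1 - exp (a - b) \<le> b - a"
      using exp_ge_add_one_self[of "a - b"] by linarith
    then have "exp b * (1 - exp (a - b)) \<le> exp b * (b - a)"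
      by (rule mult_left_mono) simp
    also have "\<dots> \<le> exp B * (b - a)"
      using that by (intro mult_right_mono) auto
    finally show ?thesis by (simp add: exp_diff algebra_simps)
  qed
  then show "dist (exp a) (exp b) \<le> exp B * dist a b" if "a \<in> {..B}" "b \<in> {..B}" for a b
    using that by (cases "a \<le> b") (auto simp: dist_real_def abs_if)
qed simp

lemma representable_chord:
  fixes G :: "real^'n \<Rightarrow> real^'n"
  assumes G: "\<And>x. x \<in> X \<Longrightarrow> G x = a *\<^sub>R (x - c)" and "a \<noteq> 0"
    and z: "z \<in> X" and p: "p \<in> X" and "z \<noteq> p"
  shows "representable X G (\<lambda>x. relu ((p - z) \<bullet> (x - z)))"
proof -
  define n where "n = norm (p - z)"
  have "n > 0" using \<open>z \<noteq> p\<close> by (simp add: n_def)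
  have dG: "G x - G z = a *\<^sub>R (x - z)" if "x \<in> X" for x
    using G[OF that] G[OF z] by (simp add: scaleR_diff_right)
  define v where "v = (1 / (norm (G p - G z))\<^sup>2) *\<^sub>R (G p - G z)"
  have "G z \<noteq> G p" using dG[OF p] \<open>a \<noteq> 0\<close> \<open>z \<noteq> p\<close> by auto
  have "(norm (G p - G z))\<^sup>2 = a\<^sup>2 * n\<^sup>2"
    by (simp add: dG[OF p] n_def power_mult_distrib)
  moreover have "1 / (a\<^sup>2 * n\<^sup>2) * a = 1 / (a * n\<^sup>2)"
    using \<open>a \<noteq> 0\<close> by (simp add: power2_eq_square)
  ultimately have v: "v = (1 / (a * n\<^sup>2)) *\<^sub>R (p - z)"
    by (simp add: v_def dG[OF p])
  from \<open>G z \<noteq> G p\<close> have "sampled_on X G v (v \<bullet> G z)"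
    unfolding sampled_on_def sampled_neuron_def v_def using z p by blast
  then have "representable X G (\<lambda>x. n\<^sup>2 * relu (v \<bullet> G x - v \<bullet> G z))"
    by (intro representable_scale representable_neuron)
  moreover have "n\<^sup>2 * relu (v \<bullet> G x - v \<bullet> G z) = relu ((p - z) \<bullet> (x - z))" if "x \<in> X" for x
  proof -
    have "v \<bullet> G x - v \<bullet> G z = v \<bullet> (a *\<^sub>R (x - z))"
      by (simp add: dG[OF that] flip: inner_diff_right)
    also have "\<dots> = (1 / n\<^sup>2) * ((p - z) \<bullet> (x - z))"
      using \<open>a \<noteq> 0\<close> by (simp add: v)
    finally have "relu (v \<bullet> G x - v \<bullet> G z) = (1 / n\<^sup>2) * relu ((p - z) \<bullet> (x - z))"
      by (simp only:) (rule relu_scale, simp)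
    then show ?thesis
      using \<open>n > 0\<close> by simp
  qed
  ultimately show ?thesis by (rule representable_cong)
qed

lemma ridge_point:
  assumes "y \<in> Y" "\<bar>s\<bar> \<le> eps" "v \<noteq> 0"
  shows "y + (s / norm v) *\<^sub>R v \<in> {x. infdist x Y \<le> eps}"
    and "v \<bullet> (y + (s / norm v) *\<^sub>R v) = v \<bullet> y + s * norm v"
  using assms by (auto intro!: infdist_le2 simp: dist_norm inner_add_right power2_eq_square
      simp flip: power2_norm_eq_inner)

lemma representable_ridge:
  fixes G :: "real^'n \<Rightarrow> real^'n"
  assumes G: "\<And>x. x \<in> {x. infdist x Y \<le> eps} \<Longrightarrow> G x = a *\<^sub>R (x - c)" "a \<noteq> 0"
    and "v \<noteq> 0" "y \<in> Y" "-eps \<le> s" "s < eps"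
  shows "representable {x. infdist x Y \<le> eps} G (\<lambda>x. relu (v \<bullet> x - (v \<bullet> y + s * norm v)))"
proof -
  define z where "z = y + (s / norm v) *\<^sub>R v"
  define p where "p = y + (eps / norm v) *\<^sub>R v"
  have z: "z \<in> {x. infdist x Y \<le> eps}" "v \<bullet> z = v \<bullet> y + s * norm v"
    using ridge_point[of y Y s eps v] assms(3-6) unfolding z_def by auto
  have p: "p \<in> {x. infdist x Y \<le> eps}"
    using ridge_point[of y Y eps eps v] assms(3-6) unfolding p_def by auto
  have pz: "p - z = ((eps - s) / norm v) *\<^sub>R v"
    by (simp add: p_def z_def diff_divide_distrib scaleR_diff_left)
  then have "z \<noteq> p" using assms(3,6) by auto
  then have "representable {x. infdist x Y \<le> eps} G
      (\<lambda>x. (norm v / (eps - s)) * relu ((p - z) \<bullet> (x - z)))"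
    by (intro representable_scale representable_chord[OF G] z(1) p)
  moreover have "(norm v / (eps - s)) * relu ((p - z) \<bullet> (x - z)) = relu (v \<bullet> x - (v \<bullet> y + s * norm v))"
    for x
  proof -
    have "(p - z) \<bullet> (x - z) = ((eps - s) / norm v) * (v \<bullet> x - (v \<bullet> y + s * norm v))"
      by (simp add: pz z(2) inner_diff_right right_diff_distrib diff_divide_distrib)
    then show ?thesis
      using assms(3,6) relu_scale[of "(eps - s) / norm v" "v \<bullet> x - (v \<bullet> y + s * norm v)"] by simp
  qed
  ultimately show ?thesis by (rule representable_cong)
qed

lemma ridge_thresholds_subset:
  assumes "v \<noteq> 0"
  shows "{v \<bullet> y + s * norm v | y s. y \<in> Y \<and> -eps \<le> s \<and> s < eps} \<subseteq>
    (\<lambda>x. v \<bullet> x) ` {x. infdist x Y \<le> eps}"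
proof clarify
  fix y s assume "y \<in> Y" "-eps \<le> s" "s < eps"
  then have "\<bar>s\<bar> \<le> eps" by auto
  then show "v \<bullet> y + s * norm v \<in> (\<lambda>x. v \<bullet> x) ` {x. infdist x Y \<le> eps}"
    using ridge_point[OF \<open>y \<in> Y\<close> _ assms] by (intro rev_image_eqI[of "y + (s / norm v) *\<^sub>R v"]) auto
qed

lemma ridge_thresholds_dense:
  fixes Y :: "(real^'n) set"
  assumes "closed Y" "Y \<noteq> {}" "0 < eps"
  shows "(\<lambda>x. v \<bullet> x) ` {x. infdist x Y \<le> eps} \<subseteq>
    closure {v \<bullet> y + s * norm v | y s. y \<in> Y \<and> -eps \<le> s \<and> s < eps}"
proof clarify
  fix x :: "real^'n" assume "infdist x Y \<le> eps"
  moreover obtain y where "y \<in> Y" "infdist x Y = dist x y"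
    using infdist_attains_inf[OF assms(1,2)] by blast
  ultimately have y: "y \<in> Y" "norm (x - y) \<le> eps" by (auto simp: dist_norm)
  define f where "f s = v \<bullet> y + s * norm v" for s
  define s0 where "s0 = v \<bullet> (x - y) / norm v"
  have "\<bar>v \<bullet> (x - y)\<bar> \<le> norm v * norm (x - y)" by (rule Cauchy_Schwarz_ineq2)
  then have "\<bar>s0\<bar> \<le> eps"
    using y(2) assms(3) by (cases "v = 0") (auto simp: s0_def abs_divide divide_le_eq mult.commute intro: order_trans)
  then have "s0 \<in> closure {-eps..<eps}" using assms(3) by (simp add: abs_le_iff)
  moreover have "v \<bullet> x = f s0"
    by (cases "v = 0") (simp_all add: f_def s0_def inner_diff_right)
  ultimately have "v \<bullet> x \<in> f ` closure {-eps..<eps}"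
    by simp
  also have "\<dots> \<subseteq> closure (f ` {-eps..<eps})"
    by (rule continuous_image_closure_subset[of UNIV]) (auto simp: f_def intro!: continuous_intros)
  also have "\<dots> \<subseteq> closure {v \<bullet> y + s * norm v | y s. y \<in> Y \<and> -eps \<le> s \<and> s < eps}"
  proof (rule closure_mono, rule)
    fix t assume "t \<in> f ` {-eps..<eps}"
    then obtain s where "-eps \<le> s" "s < eps" "t = v \<bullet> y + s * norm v"
      unfolding f_def by auto
    with y(1) show "t \<in> {v \<bullet> y + s * norm v | y s. y \<in> Y \<and> -eps \<le> s \<and> s < eps}"
      by blast
  qed
  finally show "v \<bullet> x \<in> closure {v \<bullet> y + s * norm v | y s. y \<in> Y \<and> -eps \<le> s \<and> s < eps}" .
qed

lemma approximable_exp_inner: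
  fixes Y :: "(real^'n) set" and G :: "real^'n \<Rightarrow> real^'n"
  assumes "compact Y" "Y \<noteq> {}" "0 < eps"
    and G: "\<And>x. x \<in> {x. infdist x Y \<le> eps} \<Longrightarrow> G x = a *\<^sub>R (x - c)" "a \<noteq> 0"
  shows "approximable {x. infdist x Y \<le> eps} G (\<lambda>x. exp (v \<bullet> x))"
proof (cases "v = 0")
  case True
  then show ?thesis
    using representable_imp_approximable[OF representable_const[of _ _ 1]] by simp
next
  case False
  define X where "X = {x. infdist x Y \<le> eps}"
  define T where "T = {v \<bullet> y + s * norm v | y s. y \<in> Y \<and> -eps \<le> s \<and> s < eps}"
  have K: "compact ((\<lambda>x. v \<bullet> x) ` X)"
    unfolding X_def by (intro compact_continuous_image compact_infdist_le assms continuous_intros)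
  then obtain B where B: "\<forall>k\<in>(\<lambda>x. v \<bullet> x) ` X. \<bar>k\<bar> \<le> B"
    using compact_imp_bounded bounded_real by blast
  have "T \<subseteq> (\<lambda>x. v \<bullet> x) ` X"
    unfolding T_def X_def by (rule ridge_thresholds_subset[OF False])
  then have "closure T \<subseteq> (\<lambda>x. v \<bullet> x) ` X"
    by (rule closure_minimal[OF _ compact_imp_closed[OF K]])
  then have "closure T \<subseteq> {..B}"
    using B by (auto simp: abs_le_iff)
  then have lip: "(exp B)-lipschitz_on (closure T) exp"
    by (rule lipschitz_on_subset[OF exp_lipschitz_on_atMost])
  have dense: "(\<lambda>x. v \<bullet> x) ` X \<subseteq> closure T"
    unfolding X_def T_def by (rule ridge_thresholds_dense[OF compact_imp_closed[OF assms(1)] assms(2,3)])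
  have relu_T: "representable X G (\<lambda>x. relu (v \<bullet> x - t))" if "t \<in> T" for t
  proof -
    obtain y s where "t = v \<bullet> y + s * norm v" "y \<in> Y" "-eps \<le> s" "s < eps"
      using \<open>t \<in> T\<close> unfolding T_def by blast
    then show ?thesis
      using representable_ridge[OF G False] unfolding X_def by blast
  qed
  have "approximable X G (\<lambda>x. exp (v \<bullet> x))"
    by (rule approximable_comp_lipschitz[OF K dense lip relu_T])
  then show ?thesis unfolding X_def .
qed

inductive_set exp_sums :: "('a::real_inner \<Rightarrow> real) set" where
  scaled_exp: "(\<lambda>x. c * exp (u \<bullet> x)) \<in> exp_sums"
| add: "f \<in> exp_sums \<Longrightarrow> g \<in> exp_sums \<Longrightarrow> (\<lambda>x. f x + g x) \<in> exp_sums"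

lemma exp_sums_mult:
  assumes "f \<in> exp_sums" "g \<in> exp_sums"
  shows "(\<lambda>x. f x * g x) \<in> exp_sums"
  using assms(1)
proof induction
  case (scaled_exp c u)
  from assms(2) show ?case
  proof induction
    case (scaled_exp d w)
    have "(\<lambda>x. c * exp (u \<bullet> x) * (d * exp (w \<bullet> x))) = (\<lambda>x. (c * d) * exp ((u + w) \<bullet> x))"
      by (simp add: inner_add_left exp_add algebra_simps)
    then show ?case by (metis exp_sums.scaled_exp)
  next
    case (add g1 g2)
    then show ?case by (simp add: distrib_left exp_sums.add)
  qed
next
  case (add f1 f2)
  then show ?case by (simp add: distrib_right exp_sums.add)
qed

lemma exp_sums_continuous_on: "f \<in> exp_sums \<Longrightarrow> continuous_on S f"
  by (induction rule: exp_sums.induct) (auto intro!: continuous_intros)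

lemma approximable_exp_sums:
  assumes "\<And>u. approximable X G (\<lambda>x. exp (u \<bullet> x))" "f \<in> exp_sums"
  shows "approximable X G f"
  using assms(2) by induction (auto intro: approximable_add approximable_scale assms(1))

lemma approximable_continuous:
  fixes X :: "'a::real_inner set"
  assumes "compact X" "\<And>u. approximable X G (\<lambda>x. exp (u \<bullet> x))" "continuous_on X f"
  shows "approximable X G f"
proof -
  interpret function_ring_on exp_sums X
  proof
    show "(\<lambda>_. c) \<in> exp_sums" for c
      using exp_sums.scaled_exp[of c 0] by simp
    show "\<exists>f\<in>exp_sums. f x \<noteq> f y" if "x \<noteq> y" for x y :: 'a
    proof
      show "(\<lambda>z. 1 * exp ((x - y) \<bullet> z)) \<in> exp_sums" by (rule exp_sums.scaled_exp)
      have "(x - y) \<bullet> x - (x - y) \<bullet> y \<noteq> 0"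
        using that by (simp flip: inner_diff_right)
      then show "1 * exp ((x - y) \<bullet> x) \<noteq> 1 * exp ((x - y) \<bullet> y)"
        by simp
    qed
  qed (use assms(1) in \<open>auto intro: exp_sums_continuous_on exp_sums.add exp_sums_mult\<close>)
  show ?thesis
    using Stone_Weierstrass_basic[OF assms(3)] approximable_exp_sums[OF assms(2)]
    by (intro approximable_uniform_limit) blast
qed

lemma representable_approx_vector:
  fixes f :: "'a \<Rightarrow> real^'m"
  assumes "\<And>j. approximable X G (\<lambda>x. f x $ j)" "e > 0"
  shows "\<exists>F. representable X G F \<and> (\<forall>x\<in>X. norm (f x - F x) < e)"
proof -
  define e' where "e' = e / CARD('m)"
  have "e' > 0" using assms(2) by (simp add: e'_def)
  then have "\<forall>j. \<exists>F. representable X G F \<and> (\<forall>x\<in>X. \<bar>f x $ j - F x\<bar> < e')"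
    using assms(1) unfolding approximable_def by blast
  then obtain H where H: "\<And>j. representable X G (H j)" "\<And>j x. x \<in> X \<Longrightarrow> \<bar>f x $ j - H j x\<bar> < e'"
    by metis
  define F where "F x = (\<chi> j. H j x)" for x
  have "representable X G (\<lambda>x. \<Sum>j\<in>UNIV. H j x *\<^sub>R (axis j 1 :: real^'m))"
    by (intro representable_sum representable_linear[OF bounded_linear.linear[OF bounded_linear_scaleR_left]] H)
      simp
  moreover have "(\<Sum>j\<in>UNIV. H j x *\<^sub>R axis j 1) = F x" for x
    using basis_expansion[of "F x"] by (simp add: F_def scalar_mult_eq_scaleR)
  ultimately have "representable X G F" by simp
  moreover have "norm (f x - F x) < e" if "x \<in> X" for x
  proof -
    have "norm (f x - F x) \<le> (\<Sum>j\<in>UNIV. \<bar>f x $ j - H j x\<bar>)"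
      using norm_le_l1_cart[of "f x - F x"] by (simp add: F_def)
    also have "\<dots> < (\<Sum>j\<in>(UNIV::'m set). e')"
      using H(2)[OF that] by (intro sum_strict_mono) auto
    also have "\<dots> = e" by (simp add: e'_def)
    finally show ?thesis .
  qed
  ultimately show ?thesis by blast
qed

lemma sampled_last_layer_universal:
  fixes Y :: "(real^'n) set" and G :: "real^'n \<Rightarrow> real^'n" and f :: "real^'n \<Rightarrow> real^'m"
  assumes "compact Y" "Y \<noteq> {}" "0 < eps"
    and G: "\<And>x. x \<in> {x. infdist x Y \<le> eps} \<Longrightarrow> G x = a *\<^sub>R (x - c)" "a \<noteq> 0"
    and "continuous_on {x. infdist x Y \<le> eps} f" "e > 0"
  shows "\<exists>N>(0::nat). \<exists>V B C d. (\<forall>i<N. sampled_on {x. infdist x Y \<le> eps} G (V i) (B i)) \<and>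
    (\<forall>x\<in>{x. infdist x Y \<le> eps}. norm (f x - ((\<Sum>i<N. relu (V i \<bullet> G x - B i) *\<^sub>R C i) - d)) < e)"
proof -
  let ?X = "{x. infdist x Y \<le> eps}"
  have "approximable ?X G (\<lambda>x. f x $ j)" for j
    by (rule approximable_continuous[OF compact_infdist_le[OF assms(2,1,3)]
          approximable_exp_inner[OF assms(1-3) G] continuous_on_component[OF assms(6)]])
  then obtain F where F: "representable ?X G F" "\<forall>x\<in>?X. norm (f x - F x) < e"
    using representable_approx_vector assms(7) by blast
  obtain y where "y \<in> Y" using assms(2) by blast
  fix i :: 'n
  have y: "y \<in> ?X" "y + eps *\<^sub>R axis i 1 \<in> ?X"
    using \<open>y \<in> Y\<close> assms(3) by (auto intro!: infdist_le2[OF \<open>y \<in> Y\<close>] simp: dist_norm)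
  have "G (y + eps *\<^sub>R axis i 1) - G y = (a * eps) *\<^sub>R axis i 1"
    unfolding G(1)[OF y(1)] G(1)[OF y(2)] by (simp add: algebra_simps)
  also have "\<dots> \<noteq> 0"
    using assms(3) G(2) by (simp add: axis_eq_0_iff)
  finally have "G y \<noteq> G (y + eps *\<^sub>R axis i 1)"
    by simp
  then obtain N :: nat and V B C d where "N > 0" "\<forall>i<N. sampled_on ?X G (V i) (B i)"
    and "\<forall>x\<in>?X. F x = (\<Sum>i<N. relu (V i \<bullet> G x - B i) *\<^sub>R C i) - d"
    using representable_pos_width[OF F(1) y] by blast
  with F(2) show ?thesis
    by (intro exI[of _ N] conjI exI[of _ V] exI[of _ B] exI[of _ C] exI[of _ d]) auto
qed

text \<open>Layer 1 computes (x - m) / r, which is nonnegative when m bounds the domain from below,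
  so the later layers act as the identity.\<close>

definition shift_weights :: "real \<Rightarrow> nat \<Rightarrow> 'n \<Rightarrow> real^'n" where
  "shift_weights r l i = (if l = 1 then (1 / r) *\<^sub>R axis i 1 else axis i 1)"

definition shift_biases :: "real \<Rightarrow> real^'n \<Rightarrow> nat \<Rightarrow> 'n \<Rightarrow> real" where
  "shift_biases r m l i = (if l = 1 then m $ i / r else 0)"

lemma hidden_shift:
  assumes "0 < r" "\<And>j. m $ j \<le> x $ j" "1 \<le> k"
  shows "hidden (shift_weights r) (shift_biases r m) k x = (1 / r) *\<^sub>R (x - m)"
  using assms(3)
proof (induction k rule: dec_induct)
  case base
  have "m $ j / r \<le> x $ j / r" for j
    using assms(1,2) by (simp add: divide_right_mono)
  then show ?case
    by (simp add: shift_weights_def shift_biases_def inner_axis' vec_eq_iff relu_def diff_divide_distrib)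
next
  case (step n)
  then show ?case
    using assms(1,2) by (simp add: shift_weights_def shift_biases_def inner_axis' vec_eq_iff relu_def)
qed

lemma sampled_neuron_axis:
  "r \<noteq> 0 \<Longrightarrow> sampled_neuron p (p + r *\<^sub>R axis i 1) ((1 / r) *\<^sub>R axis i 1) (p $ i / r)"
  unfolding sampled_neuron_def by (auto simp: inner_axis' power2_eq_square axis_eq_0_iff)

lemma shift_layers_sampled:
  fixes X :: "(real^'n) set"
  assumes "0 < r" "\<And>x j. x \<in> X \<Longrightarrow> m $ j \<le> x $ j"
    and corner: "\<And>i. \<exists>x. x \<in> X \<and> x + r *\<^sub>R axis i 1 \<in> X \<and> x $ i = m $ i"
  shows "\<forall>l\<in>{1..<L}. \<forall>i. \<exists>x1\<in>X. \<exists>x2\<in>X.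
    sampled_neuron (hidden (shift_weights r) (shift_biases r m) (l - 1) x1)
      (hidden (shift_weights r) (shift_biases r m) (l - 1) x2)
      (shift_weights r l i) (shift_biases r m l i)"
proof (intro ballI allI)
  fix l i assume "l \<in> {1..<L}"
  obtain x where x: "x \<in> X" "x + r *\<^sub>R axis i 1 \<in> X" "x $ i = m $ i"
    using corner by blast
  let ?h = "hidden (shift_weights r) (shift_biases r m) (l - 1)"
  have "sampled_neuron (?h x) (?h (x + r *\<^sub>R axis i 1)) (shift_weights r l i) (shift_biases r m l i)"
  proof (cases "l = 1")
    case True
    then show ?thesis
      using sampled_neuron_axis[of r x i] assms(1) x(3) by (simp add: shift_weights_def shift_biases_def)
  next
    case False
    with \<open>l \<in> {1..<L}\<close> have "1 \<le> l - 1" by auto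
    have "?h x = (1 / r) *\<^sub>R (x - m)"
      by (rule hidden_shift[OF assms(1) assms(2)[OF x(1)] \<open>1 \<le> l - 1\<close>])
    moreover have "?h (x + r *\<^sub>R axis i 1) = (1 / r) *\<^sub>R (x + r *\<^sub>R axis i 1 - m)"
      by (rule hidden_shift[OF assms(1) assms(2)[OF x(2)] \<open>1 \<le> l - 1\<close>])
    then have "?h (x + r *\<^sub>R axis i 1) = (1 / r) *\<^sub>R (x - m) + 1 *\<^sub>R axis i 1"
      using assms(1) by (simp add: algebra_simps)
    ultimately show ?thesis
      using sampled_neuron_axis[of 1 "(1 / r) *\<^sub>R (x - m)" i] False x(3)
      by (simp add: shift_weights_def shift_biases_def)
  qed
  with x(1,2) show "\<exists>x1\<in>X. \<exists>x2\<in>X. sampled_neuron (?h x1) (?h x2) (shift_weights r l i) (shift_biases r m l i)"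
    by blast
qed

lemma infdist_le_lower_corner:
  fixes Y :: "(real^'n) set"
  assumes "compact Y" "Y \<noteq> {}" "0 \<le> eps"
  obtains m where "\<And>x j. x \<in> {x. infdist x Y \<le> eps} \<Longrightarrow> m $ j \<le> x $ j"
    and "\<And>i. \<exists>x. x \<in> {x. infdist x Y \<le> eps} \<and> x + eps *\<^sub>R axis i 1 \<in> {x. infdist x Y \<le> eps} \<and>
      x $ i = m $ i"
proof -
  have "\<exists>y\<in>Y. \<forall>z\<in>Y. y $ i \<le> z $ i" for i
    by (rule continuous_attains_inf[OF assms(1,2)]) (auto intro: continuous_intros)
  then obtain y where y: "\<And>i. y i \<in> Y" "\<And>i z. z \<in> Y \<Longrightarrow> y i $ i \<le> z $ i"
    by metis
  define m where "m = (\<chi> i. y i $ i - eps)"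
  show thesis
  proof
    fix x j assume "x \<in> {x. infdist x Y \<le> eps}"
    moreover obtain z where "z \<in> Y" "infdist x Y = dist x z"
      using infdist_attains_inf[OF compact_imp_closed[OF assms(1)] assms(2)] by blast
    moreover have "\<bar>x $ j - z $ j\<bar> \<le> dist x z"
      using component_le_norm_cart[of "x - z" j] by (simp add: dist_norm)
    ultimately show "m $ j \<le> x $ j"
      using y(2)[of z j] by (auto simp: m_def)
  next
    fix i
    have "y i - eps *\<^sub>R axis i 1 \<in> {x. infdist x Y \<le> eps}"
      using assms(3) by (auto intro!: infdist_le2[OF y(1)[of i]] simp: dist_norm)
    moreover have "y i \<in> {x. infdist x Y \<le> eps}"
      using y(1) assms(3) by simp
    ultimately show "\<exists>x. x \<in> {x. infdist x Y \<le> eps} \<and> x + eps *\<^sub>R axis i 1 \<in> {x. infdist x Y \<le> eps} \<and>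
        x $ i = m $ i"
      by (intro exI[of _ "y i - eps *\<^sub>R axis i 1"]) (simp add: m_def)
  qed
qed

theorem lemma5:
  fixes X' :: "(real^'n) set" and epsI :: real and L :: nat
    and f :: "real^'n \<Rightarrow> real^'m"
  assumes "X' \<noteq> {}" and "compact X'" and "reach X' > 0"
    and "0 < epsI" and "ereal epsI < reach X'" and "epsI < 1"
    and "L > 1"
    and "continuous_on {x. infdist x X' \<le> epsI} f"
    and "e > 0"
  shows "\<exists>NL>0. \<exists>w b wL bL c d.
           sampled_net {x. infdist x X' \<le> epsI} L w b NL wL bL \<and>
           (\<forall>x\<in>{x. infdist x X' \<le> epsI}. norm (f x - net L w b NL wL bL c d x) < e)"
proof -
  let ?X = "{x. infdist x X' \<le> epsI}"
  obtain m where m: "\<And>x j. x \<in> ?X \<Longrightarrow> m $ j \<le> x $ j"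
    and corner: "\<And>i. \<exists>x. x \<in> ?X \<and> x + epsI *\<^sub>R axis i 1 \<in> ?X \<and> x $ i = m $ i"
    using infdist_le_lower_corner[OF assms(2,1) less_imp_le[OF assms(4)]] by blast
  define w :: "nat \<Rightarrow> 'n \<Rightarrow> real^'n" where "w = shift_weights epsI"
  define b where "b = shift_biases epsI m"
  have G: "hidden w b (L - 1) x = (1 / epsI) *\<^sub>R (x - m)" if "x \<in> ?X" for x
    unfolding w_def b_def by (rule hidden_shift[OF assms(4) m[OF that]]) (use assms(7) in simp)
  have "1 / epsI \<noteq> 0" using assms(4) by simp
  then obtain N :: nat and V B C d where "N > 0" and VB: "\<forall>i<N. sampled_on ?X (hidden w b (L - 1)) (V i) (B i)"
    and approx: "\<forall>x\<in>?X. norm (f x - ((\<Sum>i<N. relu (V i \<bullet> hidden w b (L - 1) x - B i) *\<^sub>R C i) - d)) < e"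
    using sampled_last_layer_universal[OF assms(2,1,4) G _ assms(8,9)] by blast
  have "sampled_net ?X L w b N V B"
    unfolding sampled_net_def
  proof
    show "\<forall>l\<in>{1..<L}. \<forall>i. \<exists>x1\<in>?X. \<exists>x2\<in>?X.
        sampled_neuron (hidden w b (l - 1) x1) (hidden w b (l - 1) x2) (w l i) (b l i)"
      unfolding w_def b_def by (rule shift_layers_sampled[OF assms(4) m corner])
    show "\<forall>i<N. \<exists>x1\<in>?X. \<exists>x2\<in>?X.
        sampled_neuron (hidden w b (L - 1) x1) (hidden w b (L - 1) x2) (V i) (B i)"
      using VB unfolding sampled_on_def .
  qed
  moreover have "\<forall>x\<in>?X. norm (f x - net L w b N V B C d x) < e"
    using approx by (simp add: net_def)
  ultimately show ?thesis
    using \<open>N > 0\<close> by blast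
qed

end
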